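(* Let $\kappa$ be a regular uncountable cardinal. Suppose that $\curlywedge^-(\sigma,\kappa,NS_\kappa|S)$ holds, where $\sigma$ is a regular uncountable cardinal less than $\kappa$ and $S$ is a stationary subset of $E^\kappa_{<\sigma}$. Then $\mathrm{cov}(\kappa,\sigma,\sigma,2)=\kappa$.
   Context: $acc(\kappa)$ is the set of nonzero limit ordinals below $\kappa$; $E^\kappa_{<\sigma} = \{\alpha\in acc(\kappa) : \mathrm{cf}(\alpha)<\sigma\}$; $NS_\kappa|S = \{B\subseteq\kappa : B\cap S\text{ nonstationary}\}$, with $(NS_\kappa|S)^+$ its complement in $P(\kappa)$. $P_\rho(X)=\{x\subseteq X:|x|<\rho\}$. For an infinite cardinal $\sigma$ and a limit ordinal $\delta\geq\sigma$, a subset $C$ of $P_\sigma(\delta)$ is a generalized club if there is $F:P_\omega(\delta)\to\delta$ with $\{x\in P_\sigma(\delta):F``P_\omega(x)\subseteq x\}\subseteq C$. $\curlywedge^-(\sigma,\kappa,J)$ asserts the existence, for $i\in\delta\in acc(\kappa)\setminus\sigma$, of a cofinal subset $C^i_\delta$ of $(P_\sigma(\delta),\subseteq)$ such that $\{\delta:\exists i<\delta\,(C^i_\delta\subseteq D)\}\in J^+$ for every generalized club $D\subseteq P_\sigma(\kappa)$. For cardinals $\rho_1\geq\rho_2\geq\rho_3\geq\omega$, $\rho_3\geq\rho_4\geq2$, $\mathrm{cov}(\rho_1,\rho_2,\rho_3,\rho_4)$ is the least cardinality of $Z\subseteq P_{\rho_2}(\rho_1)$ such that every $a\in P_{\rho_3}(\rho_1)$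 is covered by the union of some $Q\in P_{\rho_4}(Z)$. *)

theory Defs
  imports Main "HOL-Library.Countable_Set"
begin

unbundle cardinal_syntax

text \<open>Convention: the regular cardinal kappa is represented by a relation r on a type 'a
  with card_order r, i.e. r is a well-order of all of 'a which is an initial ordinal.
  Ordinals below kappa are the elements of 'a, ordered by r.  A cardinal sigma < kappa is
  represented by an element s of 'a whose initial segment underS r s is an initial ordinal;
  its cardinality is the cardinal (card_of (underS r s)).\<close>

definition olt :: "'a rel \<Rightarrow> 'a \<Rightarrow> 'a \<Rightarrow> bool" where
  "olt r a b \<longleftrightarrow> (a, b) \<in> r \<and> a \<noteq> b"

definition is_limit :: "'a rel \<Rightarrow> 'a \<Rightarrow> bool" where
  "is_limit r \<alpha> \<longleftrightarrow> (\<exists>\<beta>. olt r \<beta> \<alpha>) \<and> (\<forall>\<beta>. olt r \<beta> \<alpha> \<longrightarrow> (\<exists>\<gamma>. olt r \<beta> \<gamma> \<and> olt r \<gamma> \<alpha>))"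

definition acc :: "'a rel \<Rightarrow> 'a set" where
  "acc r = {\<alpha>. is_limit r \<alpha>}"

definition cf_less :: "'a rel \<Rightarrow> 'a \<Rightarrow> 'a \<Rightarrow> bool" where
  "cf_less r \<alpha> s \<longleftrightarrow> (\<exists>X. X \<subseteq> underS r \<alpha> \<and> (\<forall>\<beta>. olt r \<beta> \<alpha> \<longrightarrow> (\<exists>\<gamma>\<in>X. (\<beta>, \<gamma>) \<in> r))
      \<and> card_of X <o (card_of (underS r s)))"

definition E_less :: "'a rel \<Rightarrow> 'a \<Rightarrow> 'a set" where
  "E_less r s = {\<alpha> \<in> acc r. cf_less r \<alpha> s}"

definition club :: "'a rel \<Rightarrow> 'a set \<Rightarrow> bool" where
  "club r C \<longleftrightarrow> (\<forall>\<beta>. \<exists>\<gamma>\<in>C. (\<beta>, \<gamma>) \<in> r)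
     \<and> (\<forall>\<alpha>. is_limit r \<alpha> \<longrightarrow> (\<forall>\<beta>. olt r \<beta> \<alpha> \<longrightarrow> (\<exists>\<gamma>\<in>C. olt r \<beta> \<gamma> \<and> olt r \<gamma> \<alpha>)) \<longrightarrow> \<alpha> \<in> C)"

definition stationary :: "'a rel \<Rightarrow> 'a set \<Rightarrow> bool" where
  "stationary r S \<longleftrightarrow> (\<forall>C. club r C \<longrightarrow> S \<inter> C \<noteq> {})"

definition NS_restr :: "'a rel \<Rightarrow> 'a set \<Rightarrow> 'a set set" where
  "NS_restr r S = {B. \<not> stationary r (B \<inter> S)}"

definition NS_restr_pos :: "'a rel \<Rightarrow> 'a set \<Rightarrow> 'a set set" where
  "NS_restr_pos r S = UNIV - NS_restr r S"

definition P_lt :: "'a set \<Rightarrow> 'b rel \<Rightarrow> 'a set set" where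
  "P_lt A \<rho> = {x. x \<subseteq> A \<and> card_of x <o \<rho>}"

definition subset_cofinal :: "'a set set \<Rightarrow> 'a set set \<Rightarrow> bool" where
  "subset_cofinal C P \<longleftrightarrow> C \<subseteq> P \<and> (\<forall>x\<in>P. \<exists>y\<in>C. x \<subseteq> y)"

definition gen_club :: "'b rel \<Rightarrow> 'a set \<Rightarrow> 'a set set \<Rightarrow> bool" where
  "gen_club \<sigma> A C \<longleftrightarrow> C \<subseteq> P_lt A \<sigma> \<and>
     (\<exists>F :: 'a set \<Rightarrow> 'a. (\<forall>y. finite y \<and> y \<subseteq> A \<longrightarrow> F y \<in> A) \<and>
        {x \<in> P_lt A \<sigma>. \<forall>y. finite y \<and> y \<subseteq> x \<longrightarrow> F y \<in> x} \<subseteq> C)"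

definition curlywedge_minus :: "'a rel \<Rightarrow> 'a \<Rightarrow> 'a set \<Rightarrow> bool" where
  "curlywedge_minus r s S \<longleftrightarrow>
    (\<exists>C :: 'a \<Rightarrow> 'a \<Rightarrow> 'a set set.
      (\<forall>\<delta> i. \<delta> \<in> acc r \<and> (s, \<delta>) \<in> r \<and> olt r i \<delta> \<longrightarrow>
          subset_cofinal (C i \<delta>) (P_lt (underS r \<delta>) (card_of (underS r s))))
      \<and> (\<forall>D. gen_club (card_of (underS r s)) UNIV D \<longrightarrow>
          {\<delta> \<in> acc r. (s, \<delta>) \<in> r \<and> (\<exists>i. olt r i \<delta> \<and> C i \<delta> \<subseteq> D)} \<in> NS_restr_pos r S))"

definition cov_family :: "'a set \<Rightarrow> 'b rel \<Rightarrow> 'c rel \<Rightarrow> 'd rel \<Rightarrow> 'a set set \<Rightarrow> bool" where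
  "cov_family A \<rho>2 \<rho>3 \<rho>4 Z \<longleftrightarrow> Z \<subseteq> P_lt A \<rho>2 \<and>
     (\<forall>a\<in>P_lt A \<rho>3. \<exists>Q. Q \<subseteq> Z \<and> card_of Q <o \<rho>4 \<and> a \<subseteq> \<Union>Q)"

definition cov_eq :: "'a set \<Rightarrow> 'b rel \<Rightarrow> 'c rel \<Rightarrow> 'd rel \<Rightarrow> 'e rel \<Rightarrow> bool" where
  "cov_eq A \<rho>2 \<rho>3 \<rho>4 \<theta> \<longleftrightarrow>
     (\<exists>Z. cov_family A \<rho>2 \<rho>3 \<rho>4 Z \<and> card_of Z =o \<theta>) \<and>
     (\<forall>Z. cov_family A \<rho>2 \<rho>3 \<rho>4 Z \<longrightarrow> \<theta> \<le>o card_of Z)"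

definition sigma_card :: "'a rel \<Rightarrow> 'a \<Rightarrow> 'a rel" where
  "sigma_card r s = (card_of (underS r s))"

end

theory Submission
  imports Defs
begin

(* cov(kappa, sigma, sigma, 2) >= kappa is mere counting: the members of a covering family
   have size < sigma < kappa, so fewer than kappa of them have a union of size < kappa.

   For the converse, take all sets  Inter {x in C^i_delta. nu <= x}  with nu < sigma that have
   size < sigma; there are at most kappa of them.  Given a in P_sigma(kappa), code a injectively
   by f into sigma; by regularity of sigma, f[a] is bounded by some nu < sigma.  The sets closed
   under the decoding map {f(alpha)} |-> alpha form a generalized club D, and the principle gives
   delta and i with C^i_delta <= D.  So every x in C^i_delta containing nu contains a, and a lies
   in the single set  Inter {x in C^i_delta. nu <= x}, which has size < sigma because C^i_delta is
   cofinal in P_sigma(delta).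

   Only one point of the stationary set supplied by the principle is needed. *)

lemma card_of_singleton_ordLess_ctwo: "|{x}| <o ctwo"
proof -
  have "\<not> |UNIV :: bool set| \<le>o |{x}|"
  proof
    assume "|UNIV :: bool set| \<le>o |{x}|"
    then obtain f :: "bool \<Rightarrow> _" where "inj f" "range f \<subseteq> {x}"
      by (auto simp flip: card_of_ordLeq)
    then show False by (metis (full_types) inj_eq singletonD subsetD rangeI)
  qed
  then show ?thesis
    unfolding ctwo_def by (simp add: not_ordLeq_iff_ordLess card_of_Well_order)
qed

lemma card_of_Union_ordLess:
  assumes U: "infinite U" "|U| <o \<kappa>"
    and Z: "|Z| <o \<kappa>" "\<forall>z\<in>Z. |z| \<le>o |U|"
  shows "|\<Union>Z| <o \<kappa>"
proof (cases "|Z| \<le>o |U|")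
  case True
  then have "|\<Union>Z| \<le>o |U|"
    using card_of_UNION_ordLeq_infinite[OF U(1) True, of "\<lambda>z. z"] Z(2) by simp
  then show ?thesis using U(2) by (rule ordLeq_ordLess_trans)
next
  case False
  then have UZ: "|U| \<le>o |Z|"
    using ordLeq_total[OF card_of_Well_order card_of_Well_order] by blast
  have "\<forall>z\<in>Z. |z| \<le>o |Z|" using Z(2) UZ ordLeq_transitive by blast
  then have "|\<Union>Z| \<le>o |Z|"
    using card_of_UNION_ordLeq_infinite[OF card_of_ordLeq_infinite[OF UZ U(1)]
        ordLeq_reflexive[OF card_of_Well_order], of "\<lambda>z. z"] by simp
  then show ?thesis using Z(1) by (rule ordLeq_ordLess_trans)
qed

lemma cov_family_card_of_ge:
  assumes cov: "cov_family A \<rho> \<rho> \<rho>' Z"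
    and \<rho>: "Card_order \<rho>" "infinite (Field \<rho>)" "\<rho> <o |A|"
  shows "|A| \<le>o |Z|"
proof (rule ccontr)
  assume "\<not> |A| \<le>o |Z|"
  then have Z_small: "|Z| <o |A|"
    by (simp add: not_ordLeq_iff_ordLess card_of_Well_order)
  have "A \<subseteq> \<Union>Z"
  proof
    fix \<alpha> assume "\<alpha> \<in> A"
    moreover have "|{\<alpha>}| <o \<rho>"
      by (rule finite_ordLess_infinite[OF card_of_Well_order card_order_on_well_order_on[OF \<rho>(1)]])
        (simp_all add: Field_card_of \<rho>(2))
    ultimately have "{\<alpha>} \<in> P_lt A \<rho>" unfolding P_lt_def by simp
    then show "\<alpha> \<in> \<Union>Z" using cov unfolding cov_family_def by blast
  qed
  moreover have "|\<Union>Z| <o |A|"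
  proof (rule card_of_Union_ordLess)
    show "|Field \<rho>| <o |A|" using card_of_Field_ordIso[OF \<rho>(1)] \<rho>(3) by (rule ordIso_ordLess_trans)
    show "\<forall>z\<in>Z. |z| \<le>o |Field \<rho>|"
    proof
      fix z assume "z \<in> Z"
      then have "|z| <o \<rho>" using cov unfolding cov_family_def P_lt_def by blast
      then show "|z| \<le>o |Field \<rho>|"
        using card_of_Field_ordIso[OF \<rho>(1)] ordIso_symmetric ordLess_ordIso_trans ordLess_imp_ordLeq
        by blast
    qed
  qed (use \<rho>(2) Z_small in auto)
  ultimately show False
    using card_of_mono1[of A "\<Union>Z"] not_ordLess_ordLeq by blast
qed

lemma regularCard_bounded_underS:
  assumes \<rho>: "Card_order \<rho>" "regularCard \<rho>" "infinite (Field \<rho>)"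
    and B: "B \<subseteq> Field \<rho>" "|B| <o \<rho>"
  shows "\<exists>\<nu>\<in>Field \<rho>. B \<subseteq> underS \<rho> \<nu>"
proof -
  have wo: "wo_rel \<rho>" using \<rho>(1) by (rule Card_order_wo_rel)
  have "relChain \<rho> (under \<rho>)"
    unfolding relChain_def using under_incr[OF wo_rel.TRANS[OF wo]] by blast
  moreover have "B \<subseteq> (\<Union>i\<in>Field \<rho>. under \<rho> i)"
    using B(1) wo_rel.REFL[OF wo] by (auto simp: under_def refl_on_def)
  ultimately obtain i where i: "i \<in> Field \<rho>" "B \<subseteq> under \<rho> i"
    using regularCard_UNION[OF \<rho>(1,2) _ _ B(2)] by blast
  then obtain \<nu> where \<nu>: "\<nu> \<in> Field \<rho>" "i \<noteq> \<nu>" "(i, \<nu>) \<in> \<rho>"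
    using infinite_Card_order_limit[OF \<rho>(1,3)] by blast
  have "under \<rho> i \<subseteq> underS \<rho> \<nu>"
    using \<nu> wo_rel.TRANS[OF wo] wo_rel.ANTISYM[OF wo]
    unfolding under_def underS_def trans_def antisym_def by blast
  then show ?thesis using i(2) \<nu>(1) by blast
qed

lemma underS_Restr_underS:
  assumes "trans r" "antisym r" "\<nu> \<in> underS r s"
  shows "underS (Restr r (underS r s)) \<nu> = underS r \<nu>"
proof -
  have "underS r \<nu> \<subseteq> underS r s"
    using assms underS_incr[OF assms(1,2)] by (auto simp: underS_def)
  then show ?thesis using assms(3) by (auto simp: underS_def)
qed

lemma card_of_underS_ordLess_initial:
  assumes "card_order_on (underS r s) (Restr r (underS r s))" "trans r" "antisym r"
    and "\<nu> \<in> underS r s"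
  shows "|underS r \<nu>| <o |underS r s|"
proof -
  let ?\<sigma> = "Restr r (underS r s)"
  have \<sigma>: "underS r s = Field ?\<sigma>" "Card_order ?\<sigma>"
    using card_order_on_Card_order[OF assms(1)] by auto
  have "|underS ?\<sigma> \<nu>| <o ?\<sigma>" using card_of_underS[OF \<sigma>(2)] \<sigma>(1) assms(4) by simp
  moreover have "?\<sigma> =o |underS r s|"
    using card_of_Field_ordIso[OF \<sigma>(2)] \<sigma>(1) ordIso_symmetric by fastforce
  ultimately show ?thesis
    using underS_Restr_underS[OF assms(2-4)] ordLess_ordIso_trans by fastforce
qed

lemma small_set_injects_into_initial_segment:
  assumes \<sigma>: "card_order_on (underS r s) (Restr r (underS r s))"
      "regularCard (Restr r (underS r s))" "infinite (underS r s)"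
    and a: "|a| <o |underS r s|"
  shows "\<exists>\<nu> f. \<nu> \<in> underS r s \<and> inj_on f a \<and> f ` a \<subseteq> underS r \<nu>"
proof -
  let ?\<sigma> = "Restr r (underS r s)"
  have F: "underS r s = Field ?\<sigma>" and C: "Card_order ?\<sigma>"
    using card_order_on_Card_order[OF \<sigma>(1)] by auto
  obtain f where f: "inj_on f a" "f ` a \<subseteq> underS r s"
    using ordLess_imp_ordLeq[OF a] unfolding card_of_ordLeq[symmetric] by blast
  have "|f ` a| <o ?\<sigma>"
    using ordLeq_ordLess_trans[OF card_of_image a] card_of_Field_ordIso[OF C] F
    by (metis ordLess_ordIso_trans)
  then obtain \<nu> where "\<nu> \<in> underS r s" "f ` a \<subseteq> underS ?\<sigma> \<nu>"
    using regularCard_bounded_underS[OF C \<sigma>(2)] \<sigma>(3) f(2) F by metis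
  moreover have "underS ?\<sigma> \<nu> \<subseteq> underS r \<nu>" by (auto simp: underS_def)
  ultimately show ?thesis using f(1) by blast
qed

lemma Inter_supersets_in_P_lt:
  assumes X: "subset_cofinal X (P_lt A \<rho>)" and b: "b \<in> P_lt A \<rho>"
  shows "\<Inter>{x \<in> X. b \<subseteq> x} \<in> P_lt A \<rho>"
proof -
  obtain x where x: "x \<in> X" "b \<subseteq> x" using X b unfolding subset_cofinal_def by blast
  then have "x \<in> P_lt A \<rho>" using X unfolding subset_cofinal_def by blast
  moreover have "\<Inter>{x \<in> X. b \<subseteq> x} \<subseteq> x" using x by blast
  ultimately show ?thesis
    unfolding P_lt_def using card_of_mono1 ordLeq_ordLess_trans by blast
qed

lemma subset_Inter_closed_supersets:
  assumes f: "inj_on f a" "f ` a \<subseteq> b"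
    and closed: "\<forall>x\<in>X. \<forall>y. finite y \<and> y \<subseteq> x \<longrightarrow> inv_into a f (the_elem y) \<in> x"
  shows "a \<subseteq> \<Inter>{x \<in> X. b \<subseteq> x}"
proof (intro subsetI InterI)
  fix \<alpha> x assume \<alpha>: "\<alpha> \<in> a" and x: "x \<in> {x \<in> X. b \<subseteq> x}"
  then have "finite {f \<alpha>}" "{f \<alpha>} \<subseteq> x" "x \<in> X" using f(2) by auto
  then have "inv_into a f (the_elem {f \<alpha>}) \<in> x" using closed by blast
  then show "\<alpha> \<in> x" using f(1) \<alpha> by simp
qed

lemma cov_family_ctwo_of_single_covers:
  assumes "Z \<subseteq> P_lt A \<rho>" "\<forall>a\<in>P_lt A \<rho>'. \<exists>z\<in>Z. a \<subseteq> z"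
  shows "cov_family A \<rho> \<rho>' ctwo Z"
  unfolding cov_family_def
proof (intro conjI ballI)
  fix a assume "a \<in> P_lt A \<rho>'"
  then obtain z where "z \<in> Z" "a \<subseteq> z" using assms(2) by blast
  then show "\<exists>Q\<subseteq>Z. |Q| <o ctwo \<and> a \<subseteq> \<Union>Q"
    using card_of_singleton_ordLess_ctwo by (intro exI[of _ "{z}"]) auto
qed (use assms(1) in blast)

lemma card_order_refl_trans_antisym:
  assumes "card_order r"
  shows "refl r" "trans r" "antisym r"
  using assms unfolding card_order_on_def well_order_on_def linear_order_on_def
    partial_order_on_def preorder_on_def by blast+

lemma stationary_nonempty:
  assumes "refl r" "stationary r T"
  shows "T \<noteq> {}"
proof -
  have "club r UNIV" using assms(1) unfolding club_def refl_on_def by blast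
  then show ?thesis using assms(2) unfolding stationary_def by blast
qed

lemma curlywedge_minus_hits_gen_club:
  assumes "refl r" "curlywedge_minus r s S"
  obtains C :: "'a \<Rightarrow> 'a \<Rightarrow> 'a set set" where
    "\<And>\<delta> i. \<delta> \<in> acc r \<Longrightarrow> (s, \<delta>) \<in> r \<Longrightarrow> olt r i \<delta> \<Longrightarrow>
      subset_cofinal (C i \<delta>) (P_lt (underS r \<delta>) (sigma_card r s))"
    "\<And>D. gen_club (sigma_card r s) UNIV D \<Longrightarrow>
      \<exists>\<delta> i. \<delta> \<in> acc r \<and> (s, \<delta>) \<in> r \<and> olt r i \<delta> \<and> C i \<delta> \<subseteq> D"
proof -
  obtain C :: "'a \<Rightarrow> 'a \<Rightarrow> 'a set set" where
    cof: "\<And>\<delta> i. \<delta> \<in> acc r \<Longrightarrow> (s, \<delta>) \<in> r \<Longrightarrow> olt r i \<delta> \<Longrightarrow>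
      subset_cofinal (C i \<delta>) (P_lt (underS r \<delta>) (sigma_card r s))"
    and pos: "\<And>D. gen_club (sigma_card r s) UNIV D \<Longrightarrow>
      {\<delta> \<in> acc r. (s, \<delta>) \<in> r \<and> (\<exists>i. olt r i \<delta> \<and> C i \<delta> \<subseteq> D)} \<in> NS_restr_pos r S"
    using assms(2) unfolding curlywedge_minus_def sigma_card_def by blast
  have "\<exists>\<delta> i. \<delta> \<in> acc r \<and> (s, \<delta>) \<in> r \<and> olt r i \<delta> \<and> C i \<delta> \<subseteq> D"
    if "gen_club (sigma_card r s) UNIV D" for D
  proof -
    have "stationary r ({\<delta> \<in> acc r. (s, \<delta>) \<in> r \<and> (\<exists>i. olt r i \<delta> \<and> C i \<delta> \<subseteq> D)} \<inter> S)"
      using pos[OF that] unfolding NS_restr_pos_def NS_restr_def by blast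
    then show ?thesis using stationary_nonempty[OF assms(1)] by blast
  qed
  with cof that show ?thesis by blast
qed

lemma card_of_range_triples:
  assumes "infinite (UNIV :: 'a set)"
  shows "|range (g :: 'a \<times> 'a \<times> 'a \<Rightarrow> 'b)| \<le>o |UNIV :: 'a set|"
proof -
  have "|UNIV :: ('a \<times> 'a) set| \<le>o |UNIV :: 'a set|"
    using card_of_Times_same_infinite[OF assms] ordIso_imp_ordLeq by simp
  then have "|UNIV :: ('a \<times> 'a \<times> 'a) set| =o |UNIV :: 'a set|"
    using card_of_Times_infinite_simps(1)[OF assms, of "UNIV :: ('a \<times> 'a) set"] by simp
  then show ?thesis using card_of_image ordLeq_ordIso_trans by blast
qed

lemma Inter_supersets_covers_small_set:
  fixes r :: "'a rel" and C :: "'a \<Rightarrow> 'a \<Rightarrow> 'a set set"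
  assumes r: "trans r" "antisym r"
    and \<sigma>: "card_order_on (underS r s) (Restr r (underS r s))"
      "regularCard (Restr r (underS r s))" "infinite (underS r s)"
    and cof: "\<And>\<delta> i. \<delta> \<in> acc r \<Longrightarrow> (s, \<delta>) \<in> r \<Longrightarrow> olt r i \<delta> \<Longrightarrow>
      subset_cofinal (C i \<delta>) (P_lt (underS r \<delta>) (sigma_card r s))"
    and hits: "\<And>D. gen_club (sigma_card r s) UNIV D \<Longrightarrow>
      \<exists>\<delta> i. \<delta> \<in> acc r \<and> (s, \<delta>) \<in> r \<and> olt r i \<delta> \<and> C i \<delta> \<subseteq> D"
    and a: "a \<in> P_lt UNIV (sigma_card r s)"
  shows "\<exists>i \<delta> \<nu>. \<Inter>{x \<in> C i \<delta>. underS r \<nu> \<subseteq> x} \<in> P_lt UNIV (sigma_card r s)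
    \<and> a \<subseteq> \<Inter>{x \<in> C i \<delta>. underS r \<nu> \<subseteq> x}"
proof -
  obtain \<nu> f where \<nu>: "\<nu> \<in> underS r s" and f: "inj_on f a" "f ` a \<subseteq> underS r \<nu>"
    using small_set_injects_into_initial_segment[OF \<sigma>, of a] a
    unfolding P_lt_def sigma_card_def by blast
  define D where "D = {x \<in> P_lt UNIV (sigma_card r s).
    \<forall>y. finite y \<and> y \<subseteq> x \<longrightarrow> inv_into a f (the_elem y) \<in> x}"
  have "gen_club (sigma_card r s) UNIV D"
    unfolding gen_club_def D_def by (intro conjI exI[of _ "\<lambda>y. inv_into a f (the_elem y)"]) auto
  then obtain \<delta> i where \<delta>: "\<delta> \<in> acc r" "(s, \<delta>) \<in> r" "olt r i \<delta>" and CD: "C i \<delta> \<subseteq> D"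
    using hits by blast
  have "underS r \<nu> \<subseteq> underS r \<delta>"
    using underS_incr[OF r] \<nu> \<delta>(2) r(1) unfolding underS_def trans_def by blast
  then have "underS r \<nu> \<in> P_lt (underS r \<delta>) (sigma_card r s)"
    using card_of_underS_ordLess_initial[OF \<sigma>(1) r \<nu>]
    unfolding P_lt_def sigma_card_def by blast
  then have "\<Inter>{x \<in> C i \<delta>. underS r \<nu> \<subseteq> x} \<in> P_lt UNIV (sigma_card r s)"
    using Inter_supersets_in_P_lt[OF cof[OF \<delta>]] unfolding P_lt_def by blast
  moreover have "\<forall>x\<in>C i \<delta>. \<forall>y. finite y \<and> y \<subseteq> x \<longrightarrow> inv_into a f (the_elem y) \<in> x"
    using CD unfolding D_def by blast
  then have "a \<subseteq> \<Inter>{x \<in> C i \<delta>. underS r \<nu> \<subseteq> x}"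
    using subset_Inter_closed_supersets[OF f] by simp
  ultimately show ?thesis by blast
qed

lemma curlywedge_minus_cov_family:
  fixes r :: "'a rel"
  assumes r: "card_order r" "infinite (UNIV :: 'a set)"
    and \<sigma>: "card_order_on (underS r s) (Restr r (underS r s))"
      "regularCard (Restr r (underS r s))" "infinite (underS r s)"
    and principle: "curlywedge_minus r s S"
  shows "\<exists>Z. cov_family (UNIV :: 'a set) (sigma_card r s) (sigma_card r s) ctwo Z \<and> |Z| \<le>o r"
proof -
  have rfl: "refl r" and tr: "trans r" and an: "antisym r"
    using card_order_refl_trans_antisym[OF r(1)] by blast+
  obtain C :: "'a \<Rightarrow> 'a \<Rightarrow> 'a set set" where
    cof: "\<And>\<delta> i. \<delta> \<in> acc r \<Longrightarrow> (s, \<delta>) \<in> r \<Longrightarrow> olt r i \<delta> \<Longrightarrow>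
      subset_cofinal (C i \<delta>) (P_lt (underS r \<delta>) (sigma_card r s))"
    and hits: "\<And>D. gen_club (sigma_card r s) UNIV D \<Longrightarrow>
      \<exists>\<delta> i. \<delta> \<in> acc r \<and> (s, \<delta>) \<in> r \<and> olt r i \<delta> \<and> C i \<delta> \<subseteq> D"
    using curlywedge_minus_hits_gen_club[OF rfl principle] by blast
  define G where "G = (\<lambda>(i, \<delta>, \<nu>). \<Inter>{x \<in> C i \<delta>. underS r \<nu> \<subseteq> x})"
  define Z where "Z = range G \<inter> P_lt UNIV (sigma_card r s)"
  have "|Z| \<le>o r"
  proof -
    have "|Z| \<le>o |range G|" unfolding Z_def by (rule card_of_mono1) blast
    also have "|range G| \<le>o |UNIV :: 'a set|" using r(2) by (rule card_of_range_triples)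
    also have "|UNIV :: 'a set| =o r" using card_of_card_order_on r(1) by (rule card_order_on_ordIso)
    finally show ?thesis .
  qed
  moreover have "\<exists>z\<in>Z. a \<subseteq> z" if a: "a \<in> P_lt UNIV (sigma_card r s)" for a
  proof -
    obtain i \<delta> \<nu> where "G (i, \<delta>, \<nu>) \<in> P_lt UNIV (sigma_card r s)" "a \<subseteq> G (i, \<delta>, \<nu>)"
      using Inter_supersets_covers_small_set[OF tr an \<sigma> cof hits a] unfolding G_def by auto
    then show ?thesis unfolding Z_def by (intro bexI[of _ "G (i, \<delta>, \<nu>)"]) auto
  qed
  then have "cov_family UNIV (sigma_card r s) (sigma_card r s) ctwo Z"
    by (intro cov_family_ctwo_of_single_covers) (auto simp: Z_def)
  ultimately show ?thesis by blast
qed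

theorem corollary4p12:
  fixes r :: "'a rel" and s :: 'a and S :: "'a set"
  assumes kappa_card: "card_order r"
    and kappa_regular: "regularCard r"
    and kappa_uncountable: "\<not> countable (UNIV :: 'a set)"
    and sigma_card: "card_order_on (underS r s) (Restr r (underS r s))"
    and sigma_regular: "regularCard (Restr r (underS r s))"
    and sigma_uncountable: "\<not> countable (underS r s)"
    and S_sub: "S \<subseteq> E_less r s"
    and S_stat: "stationary r S"
    and principle: "curlywedge_minus r s S"
  shows "cov_eq (UNIV :: 'a set) (sigma_card r s) (sigma_card r s) BNF_Cardinal_Arithmetic.ctwo r"
proof -
  have inf: "infinite (UNIV :: 'a set)" "infinite (underS r s)"
    using kappa_uncountable sigma_uncountable countable_finite by blast+
  obtain Z where Z: "cov_family (UNIV :: 'a set) (sigma_card r s) (sigma_card r s) ctwo Z" "|Z| \<le>o r"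
    using curlywedge_minus_cov_family[OF kappa_card inf(1) sigma_card sigma_regular inf(2) principle]
    by blast
  have UNIV_r: "|UNIV :: 'a set| =o r"
    using card_of_card_order_on kappa_card by (rule card_order_on_ordIso)
  have "sigma_card r s <o |UNIV :: 'a set|"
    using card_of_underS[OF card_order_on_Card_order[OF kappa_card, THEN conjunct2]]
      card_order_on_Card_order[OF kappa_card] ordLess_ordIso_trans[OF _ ordIso_symmetric[OF UNIV_r]]
    unfolding sigma_card_def by blast
  then have lower: "r \<le>o |Z'|"
    if "cov_family (UNIV :: 'a set) (sigma_card r s) (sigma_card r s) ctwo Z'" for Z'
    using cov_family_card_of_ge[OF that] inf(2) ordIso_ordLeq_trans[OF ordIso_symmetric[OF UNIV_r]]
    unfolding sigma_card_def by (simp add: card_of_card_order_on Field_card_of)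
  show ?thesis
    unfolding cov_eq_def using Z lower ordIso_iff_ordLeq by blast
qed

end
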